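(* Let $N=2^{\mathsf n}$ and let $\rho_*$ be any finite-dimensional (possibly reducible) representation of the Lie algebra $\mathfrak{su}(N)$ (complexified, i.e. $\mathfrak{sl}(N;\mathbb C)$, the space of traceless $N\times N$ complex matrices), induced from a representation $\rho$ of $\mathrm{SU}(N)$. Then for non-identity Hermitian $\mathsf n$-qubit Pauli operators $P$ (tensor products of $\mathbf 1_2,\sigma^x,\sigma^y,\sigma^z$ other than the identity), the eigenvalue spectrum of $\rho_*(P)$ is independent of $P$. In particular, $\rho_*(P)$ and $-\rho_*(P)$ have the same spectrum.
   Context: $\rho_*$ is the derivative of the group homomorphism $\rho$, so that $\rho(e^{X})=e^{\rho_*(X)}$ for $X$ in the Lie algebra, extended complex-linearly. *)

theory Defs
  imports Complex_Main "Jordan_Normal_Form.Char_Poly" "Jordan_Normal_Form.Determinant"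
begin

definition ctrans :: "complex mat \<Rightarrow> complex mat" where
  "ctrans A = mat (dim_col A) (dim_row A) (\<lambda>(i,j). cnj (A $$ (j,i)))"

definition mtrace :: "complex mat \<Rightarrow> complex" where
  "mtrace A = (\<Sum>i<dim_row A. A $$ (i,i))"

definition mexp :: "complex mat \<Rightarrow> complex mat" where
  "mexp A = mat (dim_row A) (dim_col A)
     (\<lambda>(i,j). \<Sum>k. (A ^\<^sub>m k) $$ (i,j) / of_nat (fact k))"

definition SU :: "nat \<Rightarrow> complex mat set" where
  "SU N = {U. U \<in> carrier_mat N N \<and> ctrans U * U = 1\<^sub>m N \<and> det U = 1}"

definition su :: "nat \<Rightarrow> complex mat set" where
  "su N = {X. X \<in> carrier_mat N N \<and> ctrans X = - X \<and> mtrace X = 0}"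

definition sl :: "nat \<Rightarrow> complex mat set" where
  "sl N = {X. X \<in> carrier_mat N N \<and> mtrace X = 0}"

definition commutator :: "complex mat \<Rightarrow> complex mat \<Rightarrow> complex mat" where
  "commutator X Y = X * Y - Y * X"

text \<open>Single-qubit Pauli matrices: 0 = identity, 1 = sigma x, 2 = sigma y, 3 = sigma z;
  entries indexed by a b \<in> {0,1}.\<close>
definition sigma :: "nat \<Rightarrow> nat \<Rightarrow> nat \<Rightarrow> complex" where
  "sigma s a b =
    (if s = 0 then (if a = b then 1 else 0)
     else if s = 1 then (if a \<noteq> b then 1 else 0)
     else if s = 2 then (if a = 0 \<and> b = 1 then - \<i> else if a = 1 \<and> b = 0 then \<i> else 0)
     else (if a = b then (if a = 0 then 1 else -1) else 0))"

text \<open>The n-qubit Pauli string sigma_{s 0} \<otimes> ... \<otimes> sigma_{s (n-1)}, as a 2^n x 2^n matrix: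
  its (i,j) entry is the product over qubits k of the single-qubit entries at the k-th bits
  of i and j.\<close>
definition pauli_string :: "nat \<Rightarrow> (nat \<Rightarrow> nat) \<Rightarrow> complex mat" where
  "pauli_string n s = mat (2^n) (2^n)
     (\<lambda>(i,j). \<Prod>k<n. sigma (s k) ((i div 2^k) mod 2) ((j div 2^k) mod 2))"

definition nonid_pauli_label :: "nat \<Rightarrow> (nat \<Rightarrow> nat) \<Rightarrow> bool" where
  "nonid_pauli_label n s \<longleftrightarrow> (\<forall>k<n. s k \<le> 3) \<and> (\<exists>k<n. s k \<noteq> 0)"

end

theory Submission
  imports Defs "HOL-Analysis.Derivative"
begin

text \<open>If \<open>P\<close> and \<open>Q\<close> are anticommuting Hermitian involutions, then \<open>U = exp (\<pi>/4 \<cdot> Q P)\<close>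
  lies in \<open>SU(N)\<close> and conjugates \<open>P\<close> into \<open>Q\<close>. Hence \<open>\<rho>(U)\<close> conjugates
  \<open>exp (i t \<rho>\<^sub>*(P)) = \<rho>(exp (i t P))\<close> into \<open>exp (i t \<rho>\<^sub>*(Q))\<close> for every real \<open>t\<close>, and
  comparing first-order terms shows that \<open>\<rho>\<^sub>*(P)\<close> and \<open>\<rho>\<^sub>*(Q)\<close> are similar.
  Any two non-identity Pauli strings, and also \<open>P\<close> and \<open>-P\<close>, anticommute with a common
  third Pauli string, so all of them have the same characteristic polynomial under \<open>\<rho>\<^sub>*\<close>.\<close>

lemma smult_smult_mat: "a \<cdot>\<^sub>m (b \<cdot>\<^sub>m A) = (a * b) \<cdot>\<^sub>m (A :: 'a :: semigroup_mult mat)"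
  by (rule eq_matI) (auto simp: mult.assoc)

lemma one_smult_mat [simp]: "(1 :: 'a :: monoid_mult) \<cdot>\<^sub>m A = A"
  by (rule eq_matI) auto

lemma neg_one_smult_mat: "(-1 :: 'a :: ring_1) \<cdot>\<^sub>m A = - A"
  by (rule eq_matI) auto

lemma smult_pow_mat:
  assumes "A \<in> carrier_mat n n"
  shows "(c \<cdot>\<^sub>m A) ^\<^sub>m k = (c ^ k) \<cdot>\<^sub>m (A ^\<^sub>m k :: 'a :: comm_ring_1 mat)"
  using assms
  by (induction k) (simp_all add: mult_smult_assoc_mat[of _ n n _ n] mult_smult_distrib[of _ n n _ n]
      smult_smult_mat mult.commute)

lemma ctrans_carrier: "A \<in> carrier_mat n m \<Longrightarrow> ctrans A \<in> carrier_mat m n"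
  by (simp add: ctrans_def)

lemma ctrans_mult:
  assumes "A \<in> carrier_mat n m" "B \<in> carrier_mat m l"
  shows "ctrans (A * B) = ctrans B * ctrans A"
  using assms by (intro eq_matI) (auto simp: ctrans_def scalar_prod_def mult.commute)

lemma ctrans_add:
  assumes "A \<in> carrier_mat n m" "B \<in> carrier_mat n m"
  shows "ctrans (A + B) = ctrans A + ctrans B"
  using assms by (intro eq_matI) (auto simp: ctrans_def)

lemma ctrans_smult: "ctrans (c \<cdot>\<^sub>m A) = cnj c \<cdot>\<^sub>m ctrans A"
  by (intro eq_matI) (auto simp: ctrans_def)

lemma ctrans_uminus: "ctrans (- A) = - ctrans A"
  by (intro eq_matI) (auto simp: ctrans_def)

lemma ctrans_one: "ctrans (1\<^sub>m n) = 1\<^sub>m n"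
  by (intro eq_matI) (auto simp: ctrans_def)

lemma SU_mult:
  assumes U: "U \<in> SU n" and V: "V \<in> SU n"
  shows "U * V \<in> SU n"
proof -
  have Uc: "U \<in> carrier_mat n n" and Vc: "V \<in> carrier_mat n n"
    and UU: "ctrans U * U = 1\<^sub>m n" and VV: "ctrans V * V = 1\<^sub>m n"
    using U V by (auto simp: SU_def)
  have "ctrans (U * V) * (U * V) = ctrans V * (ctrans U * U) * V"
    using Uc Vc ctrans_carrier[OF Uc] ctrans_carrier[OF Vc]
    by (simp add: ctrans_mult[OF Uc Vc] assoc_mult_mat[of _ n n _ n _ n])
  also have "\<dots> = 1\<^sub>m n"
    using UU VV Vc ctrans_carrier[OF Vc] by simp
  finally show ?thesis
    using U V Uc Vc det_mult[OF Uc Vc] by (simp add: SU_def)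
qed


section \<open>The matrix exponential\<close>

lemma powser_coeff_1_eq_0_if_zero_on_line:
  fixes a :: "nat \<Rightarrow> complex"
  assumes summable: "\<And>z. summable (\<lambda>k. a k * z ^ k)" and "c \<noteq> 0"
    and zero: "\<And>t::real. (\<Sum>k. a k * (of_real t * c) ^ k) = 0"
  shows "a 1 = 0"
proof -
  define f where "f z = (\<Sum>k. a k * z ^ k)" for z
  have "(f has_field_derivative (\<Sum>k. diffs a k * 0 ^ k)) (at 0)"
    unfolding f_def by (rule termdiffs_strong_converges_everywhere[OF summable])
  then have "(f has_field_derivative a 1) (at (of_real 0 * c))"
    by (simp add: powser_zero diffs_def)
  then have "((f \<circ> (\<lambda>t. of_real t * c)) has_vector_derivative c * a 1) (at 0)"
    by (intro field_vector_diff_chain_at)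
      (auto intro!: derivative_eq_intros simp: has_vector_derivative_def scaleR_conv_of_real)
  moreover have "((f \<circ> (\<lambda>t. of_real t * c)) has_vector_derivative 0) (at 0)"
    using zero by (simp add: f_def o_def)
  ultimately show ?thesis
    using vector_derivative_unique_at \<open>c \<noteq> 0\<close> by fastforce
qed

definition entry_norm_sum :: "complex mat \<Rightarrow> real" where
  "entry_norm_sum A = (\<Sum>i<dim_row A. \<Sum>j<dim_col A. norm (A $$ (i,j)))"

lemma norm_pow_mat_index_le:
  assumes A: "A \<in> carrier_mat n n" and "i < n" "j < n"
  shows "norm ((A ^\<^sub>m k) $$ (i,j)) \<le> entry_norm_sum A ^ k"
  using \<open>j < n\<close>
proof (induction k arbitrary: j)
  case 0
  then show ?case using A \<open>i < n\<close> by (auto simp: one_mat_def)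
next
  case (Suc k)
  have "norm ((A ^\<^sub>m Suc k) $$ (i,j)) = norm (\<Sum>l<n. (A ^\<^sub>m k) $$ (i,l) * A $$ (l,j))"
    using Suc.prems A \<open>i < n\<close> by (auto simp: scalar_prod_def lessThan_atLeast0 intro!: sum.cong)
  also have "\<dots> \<le> (\<Sum>l<n. entry_norm_sum A ^ k * norm (A $$ (l,j)))"
    using Suc by (auto intro!: order.trans[OF norm_sum] sum_mono mult_right_mono simp: norm_mult)
  also have "\<dots> = entry_norm_sum A ^ k * (\<Sum>l<n. norm (A $$ (l,j)))"
    by (simp add: sum_distrib_left)
  also have "\<dots> \<le> entry_norm_sum A ^ k * entry_norm_sum A"
    unfolding entry_norm_sum_def using A Suc.prems
    by (intro mult_left_mono sum_nonneg zero_le_power) (auto intro!: sum_mono member_le_sum)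
  finally show ?case by (simp add: mult.commute)
qed

lemma mexp_smult_index_sums:
  assumes A: "A \<in> carrier_mat n n" and ij: "i < n" "j < n"
  shows "(\<lambda>k. z ^ k * (A ^\<^sub>m k) $$ (i,j) / fact k) sums mexp (z \<cdot>\<^sub>m A) $$ (i,j)"
proof -
  have "summable (\<lambda>k. z ^ k * (A ^\<^sub>m k) $$ (i,j) / fact k)"
  proof (rule summable_comparison_test)
    show "summable (\<lambda>k. inverse (fact k) * (norm z * entry_norm_sum A) ^ k)"
      by (rule summable_exp)
    show "\<exists>N. \<forall>k\<ge>N. norm (z ^ k * (A ^\<^sub>m k) $$ (i,j) / fact k)
        \<le> inverse (fact k) * (norm z * entry_norm_sum A) ^ k"
    proof (intro exI allI impI)
      fix k :: nat
      have "norm (z ^ k * (A ^\<^sub>m k) $$ (i,j) / fact k)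
          = norm z ^ k * norm ((A ^\<^sub>m k) $$ (i,j)) / fact k"
        by (simp add: norm_mult norm_divide norm_power)
      also have "\<dots> \<le> norm z ^ k * entry_norm_sum A ^ k / fact k"
        using norm_pow_mat_index_le[OF A ij] by (intro divide_right_mono mult_left_mono) auto
      finally show "norm (z ^ k * (A ^\<^sub>m k) $$ (i,j) / fact k)
          \<le> inverse (fact k) * (norm z * entry_norm_sum A) ^ k"
        by (simp add: power_mult_distrib divide_inverse mult.commute)
    qed
  qed
  moreover have "mexp (z \<cdot>\<^sub>m A) $$ (i,j) = (\<Sum>k. z ^ k * (A ^\<^sub>m k) $$ (i,j) / fact k)"
    using A ij by (simp add: mexp_def smult_pow_mat)
  ultimately show ?thesis by (simp add: summable_sums)
qed

lemma mult_mult_index: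
  assumes "A \<in> carrier_mat n n" "B \<in> carrier_mat n n" "C \<in> carrier_mat n n" "i < n" "j < n"
  shows "(A * B * C) $$ (i,j) = (\<Sum>k<n. \<Sum>l<n. A $$ (i,k) * B $$ (k,l) * C $$ (l,j))"
  using assms
  by (simp add: scalar_prod_def lessThan_atLeast0 sum_distrib_left sum_distrib_right mult.assoc)

lemma conj_eq_if_conj_mexp_eq:
  fixes A B V W :: "complex mat"
  assumes A: "A \<in> carrier_mat n n" and B: "B \<in> carrier_mat n n"
    and V: "V \<in> carrier_mat n n" and W: "W \<in> carrier_mat n n" and "c \<noteq> 0"
    and conj: "\<And>t::real. V * mexp ((of_real t * c) \<cdot>\<^sub>m A) * W = mexp ((of_real t * c) \<cdot>\<^sub>m B)"
  shows "V * A * W = B"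
proof (rule eq_matI)
  fix i j assume "i < dim_row B" "j < dim_col B"
  then have ij: "i < n" "j < n" using B by auto
  define a where "a k = ((V * A ^\<^sub>m k * W) $$ (i,j) - (B ^\<^sub>m k) $$ (i,j)) / fact k" for k
  have sums: "(\<lambda>k. a k * z ^ k) sums ((V * mexp (z \<cdot>\<^sub>m A) * W) $$ (i,j) - mexp (z \<cdot>\<^sub>m B) $$ (i,j))"
    for z
  proof -
    have mexp_carrier: "mexp (z \<cdot>\<^sub>m A) \<in> carrier_mat n n"
      using A by (simp add: mexp_def)
    have "(\<lambda>k. \<Sum>p<n. \<Sum>q<n. V $$ (i,p) * (z ^ k * (A ^\<^sub>m k) $$ (p,q) / fact k) * W $$ (q,j))
        sums (\<Sum>p<n. \<Sum>q<n. V $$ (i,p) * mexp (z \<cdot>\<^sub>m A) $$ (p,q) * W $$ (q,j))"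
      by (intro sums_sum sums_mult sums_mult2 mexp_smult_index_sums[OF A]) auto
    moreover have "(\<Sum>p<n. \<Sum>q<n. V $$ (i,p) * (z ^ k * (A ^\<^sub>m k) $$ (p,q) / fact k) * W $$ (q,j))
        = z ^ k * (V * A ^\<^sub>m k * W) $$ (i,j) / fact k" for k
      by (subst mult_mult_index[OF V _ W ij])
        (auto simp: A sum_distrib_left sum_divide_distrib intro!: sum.cong)
    ultimately have "(\<lambda>k. z ^ k * (V * A ^\<^sub>m k * W) $$ (i,j) / fact k)
        sums (V * mexp (z \<cdot>\<^sub>m A) * W) $$ (i,j)"
      using mult_mult_index[OF V mexp_carrier W ij] by simp
    from sums_diff[OF this mexp_smult_index_sums[OF B ij]] show ?thesis
      by (simp add: a_def field_simps)
  qed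
  have "a 1 = 0"
  proof (rule powser_coeff_1_eq_0_if_zero_on_line)
    show "summable (\<lambda>k. a k * z ^ k)" for z
      using sums[of z] by (rule sums_summable)
    show "(\<Sum>k. a k * (of_real t * c) ^ k) = 0" for t :: real
      using sums_unique[OF sums[of "of_real t * c"]] conj[of t] by simp
  qed fact
  then show "(V * A * W) $$ (i,j) = B $$ (i,j)"
    using A B by (simp add: a_def)
qed (use V W B in auto)

section \<open>Matrices squaring to minus one\<close>

lemma lincomb_one_mult:
  fixes M X :: "complex mat"
  assumes "M \<in> carrier_mat n n" "X \<in> carrier_mat n n"
  shows "(a \<cdot>\<^sub>m 1\<^sub>m n + b \<cdot>\<^sub>m M) * X = a \<cdot>\<^sub>m X + b \<cdot>\<^sub>m (M * X)"
  using assms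
  by (simp add: add_mult_distrib_mat[of _ n n _ _ n] mult_smult_assoc_mat[of _ n n _ n])

lemma mult_lincomb_one:
  fixes M X :: "complex mat"
  assumes "M \<in> carrier_mat n n" "X \<in> carrier_mat n n"
  shows "X * (a \<cdot>\<^sub>m 1\<^sub>m n + b \<cdot>\<^sub>m M) = a \<cdot>\<^sub>m X + b \<cdot>\<^sub>m (X * M)"
  using assms
  by (simp add: mult_add_distrib_mat[of _ n n _ n] mult_smult_distrib[of _ n n _ n])

definition cis_mat :: "nat \<Rightarrow> complex mat \<Rightarrow> real \<Rightarrow> complex mat" where
  "cis_mat n M t = of_real (cos t) \<cdot>\<^sub>m 1\<^sub>m n + of_real (sin t) \<cdot>\<^sub>m M"

lemma cis_mat_carrier: "M \<in> carrier_mat n n \<Longrightarrow> cis_mat n M t \<in> carrier_mat n n"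
  by (simp add: cis_mat_def)

lemma cis_mat_zero: "M \<in> carrier_mat n n \<Longrightarrow> cis_mat n M 0 = 1\<^sub>m n"
  by (intro eq_matI) (auto simp: cis_mat_def)

lemma cis_mat_pi_half: "M \<in> carrier_mat n n \<Longrightarrow> cis_mat n M (pi / 2) = M"
  by (intro eq_matI) (auto simp: cis_mat_def)

lemma cis_mat_add:
  assumes M: "M \<in> carrier_mat n n" and MM: "M * M = - 1\<^sub>m n"
  shows "cis_mat n M t * cis_mat n M u = cis_mat n M (t + u)"
proof -
  have "cis_mat n M t * cis_mat n M u
      = of_real (cos t) \<cdot>\<^sub>m cis_mat n M u + of_real (sin t) \<cdot>\<^sub>m (M * cis_mat n M u)"
    unfolding cis_mat_def[of n M t] using M by (intro lincomb_one_mult cis_mat_carrier)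
  also have "M * cis_mat n M u = of_real (cos u) \<cdot>\<^sub>m M - of_real (sin u) \<cdot>\<^sub>m 1\<^sub>m n"
    unfolding cis_mat_def using M MM by (subst mult_lincomb_one) (auto intro!: eq_matI)
  finally show ?thesis
    using M by (intro eq_matI) (auto simp: cis_mat_def cos_add sin_add algebra_simps)
qed

lemma anticomm_mult_cis_mat:
  assumes M: "M \<in> carrier_mat n n" and J: "J \<in> carrier_mat n n" and JM: "J * M = - (M * J)"
  shows "J * cis_mat n M t = cis_mat n M (- t) * J"
  unfolding cis_mat_def using lincomb_one_mult[OF M J] mult_lincomb_one[OF M J] JM M J
  by (intro eq_matI) auto

lemma ctrans_cis_mat:
  assumes M: "M \<in> carrier_mat n n" and "ctrans M = - M"
  shows "ctrans (cis_mat n M t) = cis_mat n M (- t)"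
  unfolding cis_mat_def using assms
  by (subst ctrans_add[of _ n n]) (auto simp: ctrans_smult ctrans_one intro!: eq_matI)

text \<open>The involution \<open>J\<close> conjugates \<open>cis_mat n M t\<close> into \<open>cis_mat n M (- t)\<close>, which
  forces \<open>det (cis_mat n M t) = \<plusminus>1\<close>; then \<open>det (cis_mat n M t) = det (cis_mat n M (t / 2))\<^sup>2 = 1\<close>.\<close>
lemma det_cis_mat:
  assumes M: "M \<in> carrier_mat n n" and MM: "M * M = - 1\<^sub>m n"
    and J: "J \<in> carrier_mat n n" and JJ: "J * J = 1\<^sub>m n" and JM: "J * M = - (M * J)"
  shows "det (cis_mat n M t) = 1"
proof -
  have "det J * det J = 1" using det_mult[OF J J] JJ by simp
  have det_neg: "det (cis_mat n M (- u)) = det (cis_mat n M u)" for u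
  proof -
    have "det J * det (cis_mat n M u) = det (cis_mat n M (- u)) * det J"
      using anticomm_mult_cis_mat[OF M J JM] det_mult[OF J cis_mat_carrier[OF M]]
        det_mult[OF cis_mat_carrier[OF M] J] by metis
    with \<open>det J * det J = 1\<close> show ?thesis
      by (metis mult.commute mult_cancel_left zero_neq_one mult_zero_left)
  qed
  have det_sq: "det (cis_mat n M u) ^ 2 = 1" for u
  proof -
    have "det (cis_mat n M u) * det (cis_mat n M (- u)) = det (cis_mat n M u * cis_mat n M (- u))"
      using det_mult[OF cis_mat_carrier[OF M] cis_mat_carrier[OF M]] by simp
    then show ?thesis
      using cis_mat_add[OF M MM, of u "- u"] cis_mat_zero[OF M] det_neg[of u]
      by (simp add: power2_eq_square)
  qed
  have "det (cis_mat n M t) = det (cis_mat n M (t / 2) * cis_mat n M (t / 2))"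
    using cis_mat_add[OF M MM, of "t / 2" "t / 2"] by simp
  also have "\<dots> = det (cis_mat n M (t / 2)) ^ 2"
    using det_mult[OF cis_mat_carrier[OF M] cis_mat_carrier[OF M]] by (simp add: power2_eq_square)
  finally show ?thesis
    using det_sq by simp
qed

lemma cis_mat_SU:
  assumes M: "M \<in> carrier_mat n n" and MM: "M * M = - 1\<^sub>m n" and "ctrans M = - M"
    and J: "J \<in> carrier_mat n n" and JJ: "J * J = 1\<^sub>m n" and JM: "J * M = - (M * J)"
  shows "cis_mat n M t \<in> SU n"
  using cis_mat_carrier[OF M] det_cis_mat[OF M MM J JJ JM] ctrans_cis_mat[OF M \<open>ctrans M = - M\<close>]
    cis_mat_add[OF M MM, of "- t" t] cis_mat_zero[OF M]
  by (simp add: SU_def)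

lemma pow_mat_if_square_eq_neg_one:
  fixes M :: "complex mat"
  assumes M: "M \<in> carrier_mat n n" and MM: "M * M = - 1\<^sub>m n"
  shows "M ^\<^sub>m k = (-1) ^ (k div 2) \<cdot>\<^sub>m (if even k then 1\<^sub>m n else M)"
proof (induction k)
  case (Suc k)
  show ?case
  proof (cases "even k")
    case True
    with Suc M show ?thesis by (simp add: mult_smult_assoc_mat[of _ n n _ n])
  next
    case False
    with Suc M MM show ?thesis
      by (auto simp: mult_smult_assoc_mat[of _ n n _ n] intro!: eq_matI elim!: oddE)
  qed
qed (use M in simp)

lemma mexp_smult_eq_cis_mat:
  assumes M: "M \<in> carrier_mat n n" and MM: "M * M = - 1\<^sub>m n"
  shows "mexp (of_real t \<cdot>\<^sub>m M) = cis_mat n M t"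
proof (rule eq_matI)
  fix i j assume "i < dim_row (cis_mat n M t)" "j < dim_col (cis_mat n M t)"
  then have ij: "i < n" "j < n" using M by (auto simp: cis_mat_def)
  have "(\<lambda>k. of_real (cos_coeff k * t ^ k) * 1\<^sub>m n $$ (i,j) + of_real (sin_coeff k * t ^ k) * M $$ (i,j))
      sums (of_real (cos t) * 1\<^sub>m n $$ (i,j) + of_real (sin t) * M $$ (i,j))"
    using cos_converges[of t] sin_converges[of t]
    by (intro sums_add sums_mult2 sums_of_real) auto
  moreover have "of_real t ^ k * (M ^\<^sub>m k) $$ (i,j) / fact k
      = of_real (cos_coeff k * t ^ k) * 1\<^sub>m n $$ (i,j) + of_real (sin_coeff k * t ^ k) * M $$ (i,j)"
    for k
    using ij M
    by (cases "even k")
      (auto simp: pow_mat_if_square_eq_neg_one[OF M MM] cos_coeff_def sin_coeff_def elim!: oddE)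
  ultimately have "mexp (of_real t \<cdot>\<^sub>m M) $$ (i,j)
      = of_real (cos t) * 1\<^sub>m n $$ (i,j) + of_real (sin t) * M $$ (i,j)"
    using sums_unique2[OF mexp_smult_index_sums[OF M ij]] by simp
  then show "mexp (of_real t \<cdot>\<^sub>m M) $$ (i,j) = cis_mat n M t $$ (i,j)"
    using ij M by (simp add: cis_mat_def)
qed (use M in \<open>auto simp: mexp_def cis_mat_def\<close>)

section \<open>Anticommuting Hermitian involutions\<close>

definition pauli_like :: "nat \<Rightarrow> complex mat \<Rightarrow> bool" where
  "pauli_like n P \<longleftrightarrow> P \<in> carrier_mat n n \<and> ctrans P = P \<and> P * P = 1\<^sub>m n \<and> mtrace P = 0"

lemma pauli_like_uminus:
  assumes "pauli_like n P"
  shows "pauli_like n (- P)"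
proof -
  have "P \<in> carrier_mat n n" using assms by (simp add: pauli_like_def)
  then have "mtrace (- P) = - mtrace P"
    by (simp add: mtrace_def flip: sum_negf)
  with assms \<open>P \<in> carrier_mat n n\<close> show ?thesis
    by (simp add: pauli_like_def ctrans_uminus)
qed

lemma pauli_like_sl: "pauli_like n P \<Longrightarrow> P \<in> sl n"
  by (simp add: pauli_like_def sl_def)

lemma smult_i_pauli_like_sq:
  assumes "pauli_like n P"
  shows "(\<i> \<cdot>\<^sub>m P) * (\<i> \<cdot>\<^sub>m P) = - 1\<^sub>m n"
  using assms
  by (auto simp: pauli_like_def mult_smult_distrib[of _ n n _ n] mult_smult_assoc_mat[of _ n n _ n]
      intro!: eq_matI)

lemma cis_mat_i_pauli_like_SU:
  assumes P: "pauli_like n P" and Q: "pauli_like n Q" and PQ: "P * Q = - (Q * P)"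
  shows "cis_mat n (\<i> \<cdot>\<^sub>m P) t \<in> SU n"
proof (rule cis_mat_SU)
  show "ctrans (\<i> \<cdot>\<^sub>m P) = - (\<i> \<cdot>\<^sub>m P)"
    using P by (auto simp: pauli_like_def ctrans_smult intro!: eq_matI)
  show "Q * (\<i> \<cdot>\<^sub>m P) = - ((\<i> \<cdot>\<^sub>m P) * Q)"
    using P Q PQ
    by (auto simp: pauli_like_def mult_smult_distrib[of _ n n _ n] mult_smult_assoc_mat[of _ n n _ n]
        intro!: eq_matI)
qed (use P Q in \<open>auto simp: pauli_like_def smult_i_pauli_like_sq\<close>)

lemma conj_cis_mat:
  assumes U: "U \<in> carrier_mat n n" and V: "V \<in> carrier_mat n n" and M: "M \<in> carrier_mat n n"
    and UV: "U * V = 1\<^sub>m n"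
  shows "U * cis_mat n M t * V = cis_mat n (U * M * V) t"
  unfolding cis_mat_def using U V M UV mult_lincomb_one[OF M U]
  by (simp add: add_mult_distrib_mat[of _ n n _ _ n] mult_smult_assoc_mat[of _ n n _ n])

text \<open>Conjugation by \<open>exp (\<pi>/4 \<cdot> Q P)\<close> rotates \<open>P\<close> into \<open>Q\<close>.\<close>
lemma anticomm_pauli_like_SU_conj:
  assumes P: "pauli_like n P" and Q: "pauli_like n Q" and PQ: "P * Q = - (Q * P)"
  obtains U V where "U \<in> SU n" "V \<in> SU n" "U * V = 1\<^sub>m n" "V * U = 1\<^sub>m n" "U * P * V = Q"
proof -
  have Pc: "P \<in> carrier_mat n n" and Qc: "Q \<in> carrier_mat n n"
    and PP: "P * P = 1\<^sub>m n" and QQ: "Q * Q = 1\<^sub>m n"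
    using P Q by (auto simp: pauli_like_def)
  define M where "M = Q * P"
  have M: "M \<in> carrier_mat n n" using Pc Qc by (simp add: M_def)
  have PM: "P * M = - (M * P)"
    using Pc Qc PP PQ by (simp add: M_def flip: assoc_mult_mat[of _ n n _ n _ n])
  have MM: "M * M = - 1\<^sub>m n"
    using Pc Qc PP QQ PQ by (simp add: M_def flip: assoc_mult_mat[of _ n n _ n _ n])
  have "ctrans M = - M"
    using P Q PQ by (simp add: M_def pauli_like_def ctrans_mult[of _ n n _ n])
  define U V where "U = cis_mat n M (pi / 4)" and "V = cis_mat n M (- (pi / 4))"
  have "U \<in> SU n" "V \<in> SU n"
    unfolding U_def V_def using cis_mat_SU[OF M MM \<open>ctrans M = - M\<close> Pc PP PM] by auto
  moreover have "U * V = 1\<^sub>m n" "V * U = 1\<^sub>m n"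
    unfolding U_def V_def using cis_mat_add[OF M MM] cis_mat_zero[OF M] by auto
  moreover have "U * P * V = Q"
  proof -
    have "P * V = U * P"
      using anticomm_mult_cis_mat[OF M Pc PM, of "- (pi / 4)"] by (simp add: U_def V_def)
    then have "U * P * V = U * (U * P)"
      using M Pc by (simp add: U_def V_def cis_mat_carrier assoc_mult_mat[of _ n n _ n _ n])
    also have "\<dots> = cis_mat n M (pi / 2) * P"
      using cis_mat_add[OF M MM, of "pi / 4" "pi / 4"] M Pc
      by (simp add: U_def cis_mat_carrier flip: assoc_mult_mat[of _ n n _ n _ n])
    also have "\<dots> = Q"
      using cis_mat_pi_half[OF M] Pc Qc PP by (simp add: M_def)
    finally show ?thesis .
  qed
  ultimately show ?thesis using that by blast
qed

section \<open>Representations of \<open>SU(N)\<close>\<close>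

text \<open>The argument only evaluates \<open>\<rho>\<^sub>*\<close> on scalar multiples of single matrices.\<close>
locale su_representation =
  fixes n d :: nat and \<rho> \<rho>d :: "complex mat \<Rightarrow> complex mat"
  assumes rho_carrier: "\<And>U. U \<in> SU n \<Longrightarrow> \<rho> U \<in> carrier_mat d d"
    and rho_hom: "\<And>U V. U \<in> SU n \<Longrightarrow> V \<in> SU n \<Longrightarrow> \<rho> (U * V) = \<rho> U * \<rho> V"
    and rho_one: "\<rho> (1\<^sub>m n) = 1\<^sub>m d"
    and rhod_carrier: "\<And>X. X \<in> sl n \<Longrightarrow> \<rho>d X \<in> carrier_mat d d"
    and rhod_smult: "\<And>c X. X \<in> sl n \<Longrightarrow> \<rho>d (c \<cdot>\<^sub>m X) = c \<cdot>\<^sub>m \<rho>d X"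
    and rhod_exp: "\<And>X. X \<in> su n \<Longrightarrow> \<rho> (mexp X) = mexp (\<rho>d X)"
begin

lemma rhod_uminus:
  assumes "X \<in> sl n"
  shows "\<rho>d (- X) = - \<rho>d X"
proof -
  have "- X = (-1) \<cdot>\<^sub>m X" by (intro eq_matI) auto
  then show ?thesis
    using rhod_smult[OF assms, of "-1"] rhod_carrier[OF assms] by (auto intro!: eq_matI)
qed

lemma rho_cis_mat:
  assumes P: "pauli_like n P"
  shows "\<rho> (cis_mat n (\<i> \<cdot>\<^sub>m P) t) = mexp ((of_real t * \<i>) \<cdot>\<^sub>m \<rho>d P)"
proof -
  have Pc: "P \<in> carrier_mat n n" using P by (simp add: pauli_like_def)
  have "of_real t \<cdot>\<^sub>m (\<i> \<cdot>\<^sub>m P) \<in> su n"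
    using P by (auto simp: su_def pauli_like_def ctrans_smult mtrace_def mult.assoc
        simp flip: sum_distrib_left intro!: eq_matI)
  then have "\<rho> (mexp (of_real t \<cdot>\<^sub>m (\<i> \<cdot>\<^sub>m P))) = mexp ((of_real t * \<i>) \<cdot>\<^sub>m \<rho>d P)"
    using rhod_exp rhod_smult pauli_like_sl[OF P] by (simp add: smult_smult_mat)
  then show ?thesis
    using mexp_smult_eq_cis_mat[OF _ smult_i_pauli_like_sq[OF P]] Pc by simp
qed

lemma char_poly_rhod_eq_if_anticomm:
  assumes P: "pauli_like n P" and Q: "pauli_like n Q" and PQ: "P * Q = - (Q * P)"
  shows "char_poly (\<rho>d P) = char_poly (\<rho>d Q)"
proof -
  obtain U V where U: "U \<in> SU n" and V: "V \<in> SU n" and UV: "U * V = 1\<^sub>m n" "V * U = 1\<^sub>m n"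
    and UPV: "U * P * V = Q"
    using anticomm_pauli_like_SU_conj[OF P Q PQ] .
  have Pc: "P \<in> carrier_mat n n" and Uc: "U \<in> carrier_mat n n" and Vc: "V \<in> carrier_mat n n"
    using P U V by (auto simp: pauli_like_def SU_def)
  have A: "\<rho>d P \<in> carrier_mat d d" and B: "\<rho>d Q \<in> carrier_mat d d"
    using rhod_carrier pauli_like_sl[OF P] pauli_like_sl[OF Q] by auto
  have RU: "\<rho> U \<in> carrier_mat d d" and RV: "\<rho> V \<in> carrier_mat d d"
    using rho_carrier U V by auto
  have conj: "\<rho> U * mexp ((of_real t * \<i>) \<cdot>\<^sub>m \<rho>d P) * \<rho> V = mexp ((of_real t * \<i>) \<cdot>\<^sub>m \<rho>d Q)"
    for t :: real
  proof -
    have "U * cis_mat n (\<i> \<cdot>\<^sub>m P) t * V = cis_mat n (\<i> \<cdot>\<^sub>m Q) t"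
      using conj_cis_mat[OF Uc Vc _ UV(1)] Uc Vc Pc UPV
      by (simp add: mult_smult_distrib[of _ n n _ n] mult_smult_assoc_mat[of _ n n _ n])
    then show ?thesis
      using rho_cis_mat[OF P] rho_cis_mat[OF Q] rho_hom cis_mat_i_pauli_like_SU[OF P Q PQ] U V
        SU_mult by metis
  qed
  have "\<rho>d Q = \<rho> U * \<rho>d P * \<rho> V"
    using conj_eq_if_conj_mexp_eq[OF A B RU RV _ conj] by simp
  moreover have "\<rho> U * \<rho> V = 1\<^sub>m d" "\<rho> V * \<rho> U = 1\<^sub>m d"
    using rho_hom[OF U V] rho_hom[OF V U] UV rho_one by auto
  ultimately have "similar_mat (\<rho>d Q) (\<rho>d P)"
    using A B RU RV by (intro similar_matI[where n=d and P="\<rho> U" and Q="\<rho> V"]) auto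
  then show ?thesis by (simp add: char_poly_similar)
qed

lemma char_poly_rhod_eq_if_common_anticomm:
  assumes "pauli_like n P" "pauli_like n Q" "pauli_like n R"
    and "P * R = - (R * P)" "Q * R = - (R * Q)"
  shows "char_poly (\<rho>d P) = char_poly (\<rho>d Q)"
  using char_poly_rhod_eq_if_anticomm assms by metis

lemma char_poly_rhod_uminus_if_anticomm:
  assumes P: "pauli_like n P" and R: "pauli_like n R" and PR: "P * R = - (R * P)"
  shows "char_poly (\<rho>d P) = char_poly (- \<rho>d P)"
proof -
  have "P \<in> carrier_mat n n" "R \<in> carrier_mat n n"
    using P R by (auto simp: pauli_like_def)
  then have "- P * R = - (R * - P)"
    using PR by simp
  then have "char_poly (\<rho>d P) = char_poly (\<rho>d (- P))"
    by (rule char_poly_rhod_eq_if_common_anticomm[OF P pauli_like_uminus[OF P] R PR])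
  then show ?thesis
    using rhod_uminus[OF pauli_like_sl[OF P]] by simp
qed

end

section \<open>Pauli strings\<close>

lemma div_pow2_mod2_add_pow2:
  assumes "k < n"
  shows "(j + 2 ^ n) div 2 ^ k mod 2 = j div 2 ^ k mod (2::nat)"
proof -
  have "(2::nat) ^ n = 2 * 2 ^ (n - k - 1) * 2 ^ k"
    using assms by (simp flip: power_add power_Suc)
  then show ?thesis by simp
qed

lemma sum_pow2_prod_bits:
  "(\<Sum>j<2^n. \<Prod>k<n. h k (j div 2^k mod 2)) = (\<Prod>k<n. h k 0 + h k (1::nat) :: complex)"
proof (induction n)
  case (Suc n)
  define F where "F j = (\<Prod>k<n. h k (j div 2^k mod 2))" for j
  have split: "(\<Sum>j<2^Suc n. g j) = (\<Sum>j<2^n. g j) + (\<Sum>j<2^n. g (j + 2^n))"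
    for g :: "nat \<Rightarrow> complex"
  proof -
    have "(\<Sum>j<2^Suc n. g j) = (\<Sum>j\<in>{0..<2^n}. g j) + (\<Sum>j\<in>{2^n..<2^n+2^n}. g j)"
      by (simp add: lessThan_atLeast0 sum.atLeastLessThan_concat mult_2)
    also have "(\<Sum>j\<in>{2^n..<2^n+2^n}. g j) = (\<Sum>j<2^n. g (j + 2^n))"
      using sum.shift_bounds_nat_ivl[of g 0 "2^n" "2^n"] by (simp add: lessThan_atLeast0)
    finally show ?thesis by (simp add: lessThan_atLeast0)
  qed
  have low: "(\<Prod>k<Suc n. h k (j div 2^k mod 2)) = F j * h n 0" if "j < 2^n" for j
    using that by (simp add: F_def)
  have high: "(\<Prod>k<Suc n. h k ((j + 2^n) div 2^k mod 2)) = F j * h n 1" if "j < 2^n" for j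
  proof -
    have "(\<Prod>k<n. h k ((j + 2^n) div 2^k mod 2)) = F j"
      unfolding F_def by (intro prod.cong) (auto simp: div_pow2_mod2_add_pow2)
    moreover have "(j + 2^n) div 2^n = 1" using that by (simp add: div_add_self2)
    ultimately show ?thesis by simp
  qed
  have "(\<Sum>j<2^Suc n. \<Prod>k<Suc n. h k (j div 2^k mod 2))
      = (\<Sum>j<2^n. F j * h n 0) + (\<Sum>j<2^n. F j * h n 1)"
    unfolding split
    by (intro arg_cong2[where f="(+)"] sum.cong refl) (simp_all only: lessThan_iff low high)
  also have "\<dots> = (\<Sum>j<2^n. F j) * (h n 0 + h n 1)"
    by (simp add: sum_distrib_right[symmetric] distrib_left)
  finally show ?case using Suc by (simp add: F_def)
qed simp

lemma eq_if_low_bits_eq: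
  fixes i j :: nat
  assumes "i < 2^n" "j < 2^n" "\<forall>k<n. i div 2^k mod 2 = j div 2^k mod 2"
  shows "i = j"
  using assms
proof (induction n arbitrary: i j)
  case (Suc n)
  have "i div 2 = j div 2"
  proof (rule Suc.IH)
    show "i div 2 < 2^n" "j div 2 < 2^n" using Suc.prems by auto
    show "\<forall>k<n. i div 2 div 2^k mod 2 = j div 2 div 2^k mod 2"
      using Suc.prems(3) by (auto simp: div_mult2_eq[symmetric] mult.commute[of 2])
  qed
  moreover have "i mod 2 = j mod 2" using Suc.prems(3)[rule_format, of 0] by simp
  ultimately show ?case by (metis div_mod_decomp)
qed simp

definition sigma_mult :: "nat \<Rightarrow> nat \<Rightarrow> nat \<Rightarrow> nat \<Rightarrow> complex" where
  "sigma_mult a b x y = sigma a x 0 * sigma b 0 y + sigma a x 1 * sigma b 1 y"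

definition sigma_comm_sign :: "nat \<Rightarrow> nat \<Rightarrow> complex" where
  "sigma_comm_sign a b = (if a \<noteq> 0 \<and> b \<noteq> 0 \<and> a \<noteq> b then -1 else 1)"

lemma nat_le_3_iff: "(a::nat) \<le> 3 \<longleftrightarrow> a = 0 \<or> a = 1 \<or> a = 2 \<or> a = 3"
  by auto

lemma cnj_sigma: "a \<le> 3 \<Longrightarrow> x < 2 \<Longrightarrow> y < 2 \<Longrightarrow> cnj (sigma a y x) = sigma a x y"
  unfolding nat_le_3_iff less_2_cases_iff by (auto simp: sigma_def)

lemma sigma_mult_self: "a \<le> 3 \<Longrightarrow> x < 2 \<Longrightarrow> y < 2 \<Longrightarrow> sigma_mult a a x y = (if x = y then 1 else 0)"
  unfolding nat_le_3_iff less_2_cases_iff by (auto simp: sigma_mult_def sigma_def)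

lemma sigma_mult_commute:
  "a \<le> 3 \<Longrightarrow> b \<le> 3 \<Longrightarrow> x < 2 \<Longrightarrow> y < 2 \<Longrightarrow> sigma_mult a b x y = sigma_comm_sign a b * sigma_mult b a x y"
  unfolding nat_le_3_iff less_2_cases_iff by (auto simp: sigma_mult_def sigma_def sigma_comm_sign_def)

lemma sigma_trace: "a \<noteq> 0 \<Longrightarrow> a \<le> 3 \<Longrightarrow> sigma a 0 0 + sigma a 1 1 = 0"
  unfolding nat_le_3_iff by (auto simp: sigma_def)

lemma pauli_string_carrier: "pauli_string n s \<in> carrier_mat (2^n) (2^n)"
  by (simp add: pauli_string_def)

lemma index_pauli_string_mult:
  assumes "i < 2^n" "j < 2^n"
  shows "(pauli_string n s * pauli_string n t) $$ (i,j)
    = (\<Prod>k<n. sigma_mult (s k) (t k) (i div 2^k mod 2) (j div 2^k mod 2))"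
proof -
  have "(pauli_string n s * pauli_string n t) $$ (i,j)
     = (\<Sum>l<2^n. \<Prod>k<n. sigma (s k) (i div 2^k mod 2) (l div 2^k mod 2)
                         * sigma (t k) (l div 2^k mod 2) (j div 2^k mod 2))"
    using assms by (simp add: pauli_string_def scalar_prod_def lessThan_atLeast0 prod.distrib)
  also have "\<dots> = (\<Prod>k<n. sigma_mult (s k) (t k) (i div 2^k mod 2) (j div 2^k mod 2))"
    by (subst sum_pow2_prod_bits) (simp add: sigma_mult_def)
  finally show ?thesis .
qed

lemma pauli_string_square:
  assumes "\<forall>k<n. s k \<le> 3"
  shows "pauli_string n s * pauli_string n s = 1\<^sub>m (2^n)"
proof (rule eq_matI)
  fix i j assume "i < dim_row (1\<^sub>m (2^n) :: complex mat)" "j < dim_col (1\<^sub>m (2^n) :: complex mat)"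
  then have ij: "i < 2^n" "j < 2^n" by auto
  have "(\<Prod>k<n. sigma_mult (s k) (s k) (i div 2^k mod 2) (j div 2^k mod 2))
      = (\<Prod>k<n. if i div 2^k mod 2 = j div 2^k mod 2 then 1 else 0)"
    using assms by (intro prod.cong) (auto simp: sigma_mult_self)
  also have "\<dots> = (if i = j then 1 else 0)"
    using eq_if_low_bits_eq[OF ij] by auto
  finally show "(pauli_string n s * pauli_string n s) $$ (i,j) = 1\<^sub>m (2^n) $$ (i,j)"
    using ij by (simp add: index_pauli_string_mult)
qed (simp_all add: pauli_string_def)

lemma pauli_string_commute:
  assumes "\<forall>k<n. s k \<le> 3" "\<forall>k<n. t k \<le> 3"
  shows "pauli_string n s * pauli_string n t
    = (\<Prod>k<n. sigma_comm_sign (s k) (t k)) \<cdot>\<^sub>m (pauli_string n t * pauli_string n s)"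
proof (rule eq_matI)
  fix i j
  assume "i < dim_row ((\<Prod>k<n. sigma_comm_sign (s k) (t k)) \<cdot>\<^sub>m (pauli_string n t * pauli_string n s))"
    and "j < dim_col ((\<Prod>k<n. sigma_comm_sign (s k) (t k)) \<cdot>\<^sub>m (pauli_string n t * pauli_string n s))"
  then have ij: "i < 2^n" "j < 2^n" by (auto simp: pauli_string_def)
  have "(pauli_string n s * pauli_string n t) $$ (i,j)
      = (\<Prod>k<n. sigma_comm_sign (s k) (t k) * sigma_mult (t k) (s k) (i div 2^k mod 2) (j div 2^k mod 2))"
    unfolding index_pauli_string_mult[OF ij] using assms
    by (intro prod.cong refl sigma_mult_commute) auto
  also have "\<dots> = (\<Prod>k<n. sigma_comm_sign (s k) (t k)) * (pauli_string n t * pauli_string n s) $$ (i,j)"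
    unfolding index_pauli_string_mult[OF ij] by (rule prod.distrib)
  finally show "(pauli_string n s * pauli_string n t) $$ (i,j)
      = ((\<Prod>k<n. sigma_comm_sign (s k) (t k)) \<cdot>\<^sub>m (pauli_string n t * pauli_string n s)) $$ (i,j)"
    using ij by (simp add: pauli_string_def)
qed (simp_all add: pauli_string_def)

lemma ctrans_pauli_string:
  assumes "\<forall>k<n. s k \<le> 3"
  shows "ctrans (pauli_string n s) = pauli_string n s"
proof (rule eq_matI)
  fix i j assume "i < dim_row (pauli_string n s)" "j < dim_col (pauli_string n s)"
  then have ij: "i < 2^n" "j < 2^n" by (auto simp: pauli_string_def)
  have "cnj (pauli_string n s $$ (j,i))
      = (\<Prod>k<n. cnj (sigma (s k) (j div 2^k mod 2) (i div 2^k mod 2)))"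
    using ij by (simp add: pauli_string_def)
  also have "\<dots> = (\<Prod>k<n. sigma (s k) (i div 2^k mod 2) (j div 2^k mod 2))"
    using assms by (intro prod.cong refl cnj_sigma) auto
  finally show "ctrans (pauli_string n s) $$ (i,j) = pauli_string n s $$ (i,j)"
    using ij by (simp add: ctrans_def pauli_string_def)
qed (simp_all add: ctrans_def pauli_string_def)

lemma mtrace_pauli_string:
  assumes "nonid_pauli_label n s"
  shows "mtrace (pauli_string n s) = 0"
proof -
  obtain k where k: "k < n" "s k \<noteq> 0" "s k \<le> 3"
    using assms by (auto simp: nonid_pauli_label_def)
  have "mtrace (pauli_string n s) = (\<Sum>j<2^n. \<Prod>k<n. sigma (s k) (j div 2^k mod 2) (j div 2^k mod 2))"
    by (simp add: mtrace_def pauli_string_def)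
  also have "\<dots> = (\<Prod>k<n. sigma (s k) 0 0 + sigma (s k) 1 1)"
    by (rule sum_pow2_prod_bits)
  also have "\<dots> = 0"
    using k sigma_trace[of "s k"] by (intro prod_zero) auto
  finally show ?thesis .
qed

lemma pauli_string_pauli_like:
  "nonid_pauli_label n s \<Longrightarrow> pauli_like (2^n) (pauli_string n s)"
  by (simp add: pauli_like_def nonid_pauli_label_def pauli_string_carrier pauli_string_square
      ctrans_pauli_string mtrace_pauli_string)

lemma prod_sigma_comm_sign_single_site:
  fixes n k :: nat
  assumes "k < n" "\<And>j. j < n \<Longrightarrow> j \<noteq> k \<Longrightarrow> s j = 0 \<or> r j = 0"
  shows "(\<Prod>j<n. sigma_comm_sign (s j) (r j)) = sigma_comm_sign (s k) (r k)"
proof -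
  have "(\<Prod>j<n. sigma_comm_sign (s j) (r j)) = (\<Prod>j<n. if j = k then sigma_comm_sign (s k) (r k) else 1)"
    by (intro prod.cong) (auto simp: sigma_comm_sign_def dest: assms(2))
  also have "\<dots> = sigma_comm_sign (s k) (r k)"
    using assms(1) by simp
  finally show ?thesis .
qed

text \<open>If \<open>s\<close> and \<open>t\<close> are both non-trivial at some site, put there a Pauli matrix
  different from both; otherwise anticommute with each of them at a separate site.\<close>
lemma exists_label_anticomm_both:
  assumes s: "nonid_pauli_label n s" and t: "nonid_pauli_label n t"
  obtains r where "nonid_pauli_label n r"
    "(\<Prod>k<n. sigma_comm_sign (s k) (r k)) = -1" "(\<Prod>k<n. sigma_comm_sign (t k) (r k)) = -1"
proof (cases "\<exists>k<n. s k \<noteq> 0 \<and> t k \<noteq> 0")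
  case True
  then obtain k where k: "k < n" "s k \<noteq> 0" "t k \<noteq> 0" by blast
  define c where "c = (if s k \<noteq> 1 \<and> t k \<noteq> 1 then 1 else if s k \<noteq> 2 \<and> t k \<noteq> 2 then 2 else (3::nat))"
  have c: "c \<noteq> 0" "c \<le> 3" "c \<noteq> s k" "c \<noteq> t k"
    using s t k by (auto simp: c_def nonid_pauli_label_def)
  define r where "r j = (if j = k then c else 0)" for j
  have "nonid_pauli_label n r" using k c by (auto simp: nonid_pauli_label_def r_def)
  moreover have "(\<Prod>j<n. sigma_comm_sign (u j) (r j)) = -1" if "u k \<noteq> 0" "u k \<noteq> c" for u
    using prod_sigma_comm_sign_single_site[OF k(1), of u r] that c by (simp add: r_def sigma_comm_sign_def)
  ultimately show ?thesis using that k c by metis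
next
  case False
  obtain k0 where k0: "k0 < n" "s k0 \<noteq> 0" using s by (auto simp: nonid_pauli_label_def)
  obtain k1 where k1: "k1 < n" "t k1 \<noteq> 0" using t by (auto simp: nonid_pauli_label_def)
  define c0 where "c0 = (if s k0 \<noteq> 1 then 1 else (2::nat))"
  define c1 where "c1 = (if t k1 \<noteq> 1 then 1 else (2::nat))"
  define r where "r j = (if j = k0 then c0 else if j = k1 then c1 else 0)" for j
  have "nonid_pauli_label n r" using k0 by (auto simp: nonid_pauli_label_def r_def c0_def c1_def)
  moreover have "(\<Prod>j<n. sigma_comm_sign (s j) (r j)) = -1"
    using prod_sigma_comm_sign_single_site[OF k0(1), of s r] False k0 k1
    by (auto simp: r_def sigma_comm_sign_def c0_def c1_def)
  moreover have "(\<Prod>j<n. sigma_comm_sign (t j) (r j)) = -1"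
    using prod_sigma_comm_sign_single_site[OF k1(1), of t r] False k0 k1
    by (auto simp: r_def sigma_comm_sign_def c0_def c1_def)
  ultimately show ?thesis using that by blast
qed

lemma exists_pauli_string_anticomm_both:
  assumes s: "nonid_pauli_label n s" and t: "nonid_pauli_label n t"
  obtains r where "nonid_pauli_label n r"
    "pauli_string n s * pauli_string n r = - (pauli_string n r * pauli_string n s)"
    "pauli_string n t * pauli_string n r = - (pauli_string n r * pauli_string n t)"
proof -
  have anticomm: "pauli_string n u * pauli_string n r = - (pauli_string n r * pauli_string n u)"
    if "nonid_pauli_label n u" "nonid_pauli_label n r" "(\<Prod>k<n. sigma_comm_sign (u k) (r k)) = -1"
    for u r
    using that pauli_string_commute[of n u r] by (simp add: nonid_pauli_label_def neg_one_smult_mat)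
  obtain r where "nonid_pauli_label n r"
    "(\<Prod>k<n. sigma_comm_sign (s k) (r k)) = -1" "(\<Prod>k<n. sigma_comm_sign (t k) (r k)) = -1"
    using exists_label_anticomm_both[OF s t] .
  with anticomm s t that show ?thesis by blast
qed

theorem lemma2p2:
  fixes n d :: nat
    and \<rho> :: "complex mat \<Rightarrow> complex mat"
    and \<rho>d :: "complex mat \<Rightarrow> complex mat"
  defines "N \<equiv> 2 ^ n"
  assumes rho_carrier: "\<And>U. U \<in> SU N \<Longrightarrow> \<rho> U \<in> carrier_mat d d"
    and rho_hom: "\<And>U V. U \<in> SU N \<Longrightarrow> V \<in> SU N \<Longrightarrow> \<rho> (U * V) = \<rho> U * \<rho> V"
    and rho_one: "\<rho> (1\<^sub>m N) = 1\<^sub>m d"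
    and rhod_carrier: "\<And>X. X \<in> sl N \<Longrightarrow> \<rho>d X \<in> carrier_mat d d"
    and rhod_add: "\<And>X Y. X \<in> sl N \<Longrightarrow> Y \<in> sl N \<Longrightarrow> \<rho>d (X + Y) = \<rho>d X + \<rho>d Y"
    and rhod_smult: "\<And>c X. X \<in> sl N \<Longrightarrow> \<rho>d (c \<cdot>\<^sub>m X) = c \<cdot>\<^sub>m \<rho>d X"
    and rhod_bracket: "\<And>X Y. X \<in> sl N \<Longrightarrow> Y \<in> sl N \<Longrightarrow>
           \<rho>d (commutator X Y) = commutator (\<rho>d X) (\<rho>d Y)"
    and rhod_exp: "\<And>X. X \<in> su N \<Longrightarrow> \<rho> (mexp X) = mexp (\<rho>d X)"
  shows "(\<forall>s t. nonid_pauli_label n s \<longrightarrow> nonid_pauli_label n t \<longrightarrow>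
            char_poly (\<rho>d (pauli_string n s)) = char_poly (\<rho>d (pauli_string n t)))
       \<and> (\<forall>s. nonid_pauli_label n s \<longrightarrow>
            char_poly (\<rho>d (pauli_string n s)) = char_poly (- \<rho>d (pauli_string n s)))"
proof -
  interpret su_representation N d \<rho> \<rho>d
    using rho_carrier rho_hom rho_one rhod_carrier rhod_smult rhod_exp by unfold_locales
  have pauli_like: "pauli_like N (pauli_string n s)" if "nonid_pauli_label n s" for s
    using pauli_string_pauli_like[OF that] by (simp add: N_def)
  have "char_poly (\<rho>d (pauli_string n s)) = char_poly (\<rho>d (pauli_string n t))"
    if s: "nonid_pauli_label n s" and t: "nonid_pauli_label n t" for s t
  proof -
    obtain r where r: "nonid_pauli_label n r"
      and sr: "pauli_string n s * pauli_string n r = - (pauli_string n r * pauli_string n s)"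
      and tr: "pauli_string n t * pauli_string n r = - (pauli_string n r * pauli_string n t)"
      using exists_pauli_string_anticomm_both[OF s t] .
    show ?thesis
      by (rule char_poly_rhod_eq_if_common_anticomm[OF pauli_like[OF s] pauli_like[OF t]
            pauli_like[OF r] sr tr])
  qed
  moreover have "char_poly (\<rho>d (pauli_string n s)) = char_poly (- \<rho>d (pauli_string n s))"
    if s: "nonid_pauli_label n s" for s
  proof -
    obtain r where r: "nonid_pauli_label n r"
      and sr: "pauli_string n s * pauli_string n r = - (pauli_string n r * pauli_string n s)"
      using exists_pauli_string_anticomm_both[OF s s] by blast
    show ?thesis
      by (rule char_poly_rhod_uminus_if_anticomm[OF pauli_like[OF s] pauli_like[OF r] sr])
  qed
  ultimately show ?thesis by blast
qed

end
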